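(* Let $\Omega\subset\mathbb{R}^2$ be a bounded open convex set containing the origin, satisfying $\sup_{\theta\in S^1}\sup_{\delta>0}\delta^{-1/2}\mu(\theta,\delta)<\infty$. Let $10\le r\le R<\infty$ and $R^{1/2}\le h\le R$. Let $J$ be a closed line segment whose endpoints lie in $\mathbb{Z}^2$, let $\mathbb{J}=J\cap\mathbb{Z}^2$, and assume $\mathrm{card}(\mathbb{J})\ge10$ and that the ninefold dilate $9J$ (the segment concentric with and parallel to $J$ of $9$ times its length) is contained in $\mathcal{A}(r,h)$. Let $d=d(\mathbb{J})$ be the distance between consecutive lattice points on $J$ and $$\mathcal{T}(\mathbb{J})=R^{3/4}d^{1/2}h^{-1/2}r^{-1/4}.$$ Then, with an implicit constant depending only on $\Omega$, $$\sqrt{Rr}\sum_{\ell\in\mathbb{J}}\mu\big(\tfrac{\ell}{|\ell|},\tfrac1{R|\ell|}\big)\lesssim\begin{cases}\big(\frac{Rr}{h^2d^2}\big)^{1/4}&\text{if }\mathrm{card}(\mathbb{J})\le\mathcal{T}(\mathbb{J}),\\[2pt] \big(\frac{r\,\mathrm{card}(\mathbb{J})}{hd^2}\big)^{1/3}&\text{if }\mathrm{card}(\mathbb{J})\ge\mathcal{T}(\mathbb{J}).\end{cases}$$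
   Context: $\rho^*(\xi)=\sup\{\langle x,\xi\rangle:x\in\Omega\}$. For $\theta\in S^1$, $\delta>0$ let $\mu(\theta,\delta)=\mathrm{diam}\{x\in\partial\Omega:\langle x,\theta\rangle=\rho^*(\theta)-\delta\}$ (diameter of the empty set is $0$). The annulus is $\mathcal{A}(r,h)=\{x\in\mathbb{R}^2:r\le\rho^*(x)\le r+h^{-1}\}$. *)

theory Defs
  imports "HOL-Analysis.Analysis"
begin

definition rho_star :: "(real^2) set \<Rightarrow> real^2 \<Rightarrow> real" where
  "rho_star \<Omega> \<xi> = (SUP x\<in>\<Omega>. inner x \<xi>)"

text \<open>mu(theta, delta): diameter of a boundary chord (diameter of empty set is 0).\<close>
definition mu :: "(real^2) set \<Rightarrow> real^2 \<Rightarrow> real \<Rightarrow> real" where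
  "mu \<Omega> \<theta> \<delta> = diameter {x \<in> frontier \<Omega>. inner x \<theta> = rho_star \<Omega> \<theta> - \<delta>}"

definition annulus :: "(real^2) set \<Rightarrow> real \<Rightarrow> real \<Rightarrow> (real^2) set" where
  "annulus \<Omega> r h = {x. r \<le> rho_star \<Omega> x \<and> rho_star \<Omega> x \<le> r + 1 / h}"

definition Z2 :: "(real^2) set" where
  "Z2 = {x. \<forall>i. x $ i \<in> \<int>}"

definition dilate9 :: "real^2 \<Rightarrow> real^2 \<Rightarrow> (real^2) set" where
  "dilate9 a b = closed_segment ((a + b) /\<^sub>R 2 - (9/2) *\<^sub>R (b - a))
                                  ((a + b) /\<^sub>R 2 + (9/2) *\<^sub>R (b - a))"

text \<open>Distance between consecutive lattice points of a lattice point set on a line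
  (these are equally spaced, so it is the minimal distance between distinct points).\<close>
definition lattice_gap :: "(real^2) set \<Rightarrow> real" where
  "lattice_gap L = Inf {dist p q | p q. p \<in> L \<and> q \<in> L \<and> p \<noteq> q}"

end

theory Submission
  imports Defs
begin

text \<open>
  The quantity mu(l/|l|, 1/(R |l|)) is the diameter of the chord
  C(l) = {x \<in> \<partial>\<Omega>. <x, l> = \<rho>*(l) - 1/R}. Let u be the unit direction of J and t(l) the
  parameter of l along J. Since 9J lies in the annulus of width 1/h, every p \<in> C(l) is almost a
  supporting point of \<Omega> along the whole line segment 9J; hence its slope <p, u> is at most
  1/(2 h |J|) in absolute value, and comparing supporting inequalities at two lattice points gives
  the almost monotonicity (t(l') - t(l)) (<p, u> - <q, u>) \<le> 2/R for p \<in> C(l), q \<in> C(l').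
  The chord C(l) is orthogonal to l and J stays at distance about r from the origin, so the
  length of C(l) is comparable to the spread of the slopes on it. Split the lattice points into
  m residue classes of t/d modulo m: inside a class the points are (m - 1) d apart, so the slope
  intervals are almost disjoint, and the spreads add up to at most m/(h |J|) + 2 card/(R (m - 1) d).
  The choice m \<approx> card (h/R)^(1/2), balanced against the trivial bound
  mu(\<theta>, \<delta>) \<le> K \<delta>^(1/2), gives the bound (R r/(h^2 d^2))^(1/4) in all cases, and
  (r card/(h d^2))^(1/3) dominates it when card \<ge> T. For h below a constant depending on \<Omega>
  the trivial bound alone suffices.
\<close>

section \<open>Planar coordinates and the support function\<close>

definition det2 :: "real^2 \<Rightarrow> real^2 \<Rightarrow> real" where
  "det2 x y = x$1 * y$2 - x$2 * y$1"

lemma inner_real2: "inner (x::real^2) y = x$1 * y$1 + x$2 * y$2"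
  by (simp add: inner_vec_def sum_2)

lemma inner_eq_unit_coords:
  assumes "norm (u::real^2) = 1"
  shows "inner p l = inner p u * inner l u + det2 l u * det2 p u"
proof -
  have "(u$1)^2 + (u$2)^2 = (norm u)^2"
    unfolding power2_norm_eq_inner by (simp add: inner_real2 power2_eq_square)
  with assms have "(u$1)^2 + (u$2)^2 = 1" by simp
  then have "inner p l = (p$1 * l$1 + p$2 * l$2) * ((u$1)^2 + (u$2)^2)"
    by (simp add: inner_real2)
  then show ?thesis
    by (simp add: inner_real2 det2_def algebra_simps power2_eq_square)
qed

lemma norm_sq_eq_unit_coords:
  assumes "norm (u::real^2) = 1"
  shows "(norm p)^2 = (inner p u)^2 + (det2 p u)^2"
  unfolding power2_norm_eq_inner using inner_eq_unit_coords[OF assms, of p p] by (simp add: power2_eq_square)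

lemma det2_add_scaleR_left: "det2 (a + t *\<^sub>R u) u = det2 a u"
  by (simp add: det2_def algebra_simps)

lemma Z2_norm_diff_ge_1:
  assumes "a \<in> Z2" "b \<in> Z2" "a \<noteq> b"
  shows "1 \<le> norm (a - b)"
proof -
  obtain i where i: "a$i \<noteq> b$i"
    using assms(3) by (metis vec_eq_iff)
  have "a$i - b$i \<in> \<int>"
    using assms(1,2) unfolding Z2_def by auto
  with i have "1 \<le> \<bar>a$i - b$i\<bar>"
    by (metis Ints_nonzero_abs_ge1 eq_iff_diff_eq_0)
  also have "\<dots> \<le> norm (a - b)"
    by (metis component_le_norm_cart vector_minus_component)
  finally show ?thesis .
qed

lemma inner_le_rho_star:
  assumes "bounded \<Omega>" "y \<in> closure \<Omega>"
  shows "inner y x \<le> rho_star \<Omega> x"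
proof -
  obtain B where B: "\<And>z. z \<in> \<Omega> \<Longrightarrow> norm z \<le> B"
    using assms(1) bounded_iff by blast
  have "bdd_above ((\<lambda>z. inner z x) ` \<Omega>)"
  proof (rule bdd_aboveI2)
    fix z assume "z \<in> \<Omega>"
    have "inner z x \<le> norm z * norm x" by (rule norm_cauchy_schwarz)
    also have "\<dots> \<le> B * norm x" using B[OF \<open>z \<in> \<Omega>\<close>] by (simp add: mult_right_mono)
    finally show "inner z x \<le> B * norm x" .
  qed
  then have "\<Omega> \<subseteq> {z. inner z x \<le> rho_star \<Omega> x}"
    unfolding rho_star_def by (auto intro: cSUP_upper)
  then have "closure \<Omega> \<subseteq> {z. inner z x \<le> rho_star \<Omega> x}"
    by (rule closure_minimal) (intro closed_Collect_le continuous_intros)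
  then show ?thesis using assms(2) by auto
qed

lemma rho_star_scaleR:
  assumes "bounded \<Omega>" "\<Omega> \<noteq> {}" "0 < c"
  shows "rho_star \<Omega> (c *\<^sub>R x) = c * rho_star \<Omega> x"
proof -
  have "rho_star \<Omega> (c *\<^sub>R x) = (SUP z\<in>\<Omega>. c * inner z x)"
    unfolding rho_star_def by simp
  also have "\<dots> = c * rho_star \<Omega> x"
    unfolding rho_star_def
  proof (rule antisym)
    show "(SUP z\<in>\<Omega>. c * inner z x) \<le> c * (SUP z\<in>\<Omega>. inner z x)"
      using assms inner_le_rho_star[OF assms(1) closure_subset[THEN subsetD]]
      by (intro cSUP_least) (auto simp: rho_star_def)
    have "(SUP z\<in>\<Omega>. inner z x) \<le> (SUP z\<in>\<Omega>. c * inner z x) / c"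
      using assms inner_le_rho_star[OF assms(1) closure_subset[THEN subsetD], of _ "c *\<^sub>R x"]
      by (intro cSUP_least) (auto simp: rho_star_def field_simps)
    then show "c * (SUP z\<in>\<Omega>. inner z x) \<le> (SUP z\<in>\<Omega>. c * inner z x)"
      using assms(3) by (simp add: field_simps)
  qed
  finally show ?thesis .
qed

lemma rho_star_ge_inradius:
  assumes "bounded \<Omega>" "cball 0 \<rho> \<subseteq> \<Omega>" "0 \<le> \<rho>"
  shows "\<rho> * norm x \<le> rho_star \<Omega> x"
proof -
  have "(\<rho> / norm x) *\<^sub>R x \<in> \<Omega>"
    using assms(2,3) by (auto simp: subset_iff)
  then have "inner ((\<rho> / norm x) *\<^sub>R x) x \<le> rho_star \<Omega> x"
    using assms(1) closure_subset inner_le_rho_star by blast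
  then show ?thesis
    by (cases "x = 0") (simp_all add: power2_norm_eq_inner[symmetric] power2_eq_square)
qed

lemma rho_star_le_outradius:
  assumes "\<Omega> \<subseteq> cball 0 \<rho>" "\<Omega> \<noteq> {}"
  shows "rho_star \<Omega> x \<le> \<rho> * norm x"
  unfolding rho_star_def
proof (rule cSUP_least[OF assms(2)])
  fix z assume "z \<in> \<Omega>"
  have "inner z x \<le> norm z * norm x" by (rule norm_cauchy_schwarz)
  also have "\<dots> \<le> \<rho> * norm x" using assms(1) \<open>z \<in> \<Omega>\<close> by (intro mult_right_mono) auto
  finally show "inner z x \<le> \<rho> * norm x" .
qed

lemma dilate9_eq: "dilate9 a b = closed_segment (a - 4 *\<^sub>R (b - a)) (a + 5 *\<^sub>R (b - a))"
proof -
  have "(a + b) /\<^sub>R 2 - (9/2) *\<^sub>R (b - a) = a - 4 *\<^sub>R (b - a)"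
       "(a + b) /\<^sub>R 2 + (9/2) *\<^sub>R (b - a) = a + 5 *\<^sub>R (b - a)"
    by (simp_all add: vec_eq_iff field_simps)
  then show ?thesis by (simp add: dilate9_def)
qed

lemma add_scaleR_diff_mem_dilate9:
  assumes "-4 \<le> s" "s \<le> 5"
  shows "a + s *\<^sub>R (b - a) \<in> dilate9 a b"
proof -
  define v where "v = (s + 4) / 9"
  have "a + s *\<^sub>R (b - a) = (1 - v) *\<^sub>R (a - 4 *\<^sub>R (b - a)) + v *\<^sub>R (a + 5 *\<^sub>R (b - a))"
    by (simp add: v_def vec_eq_iff field_simps)
  moreover have "0 \<le> v" "v \<le> 1" using assms by (simp_all add: v_def)
  ultimately show ?thesis
    unfolding dilate9_eq in_segment by blast
qed

lemma closed_segment_unit_param: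
  fixes a b l :: "'a::real_inner"
  assumes "l \<in> closed_segment a b" "a \<noteq> b"
  defines "u \<equiv> (1 / norm (b - a)) *\<^sub>R (b - a)"
  shows "l = a + inner (l - a) u *\<^sub>R u" "0 \<le> inner (l - a) u" "inner (l - a) u \<le> norm (b - a)"
proof -
  obtain v where v: "0 \<le> v" "v \<le> 1" "l = (1 - v) *\<^sub>R a + v *\<^sub>R b"
    using assms(1) unfolding in_segment by blast
  have L: "0 < norm (b - a)" using assms(2) by simp
  have "inner u u = 1"
    using L by (simp add: u_def power2_norm_eq_inner[symmetric] power2_eq_square)
  moreover have la: "l - a = (v * norm (b - a)) *\<^sub>R u"
    using L by (simp add: v(3) u_def algebra_simps)
  ultimately have t: "inner (l - a) u = v * norm (b - a)" by simp
  show "l = a + inner (l - a) u *\<^sub>R u" using la t by (simp add: algebra_simps)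
  show "0 \<le> inner (l - a) u" "inner (l - a) u \<le> norm (b - a)"
    using t v L by (simp_all add: mult_le_cancel_right1)
qed

section \<open>Elementary estimates\<close>

lemma sum_interval_lengths_le:
  fixes t lo hi :: "'a \<Rightarrow> real"
  assumes "finite P" "inj_on t P" "A \<le> B" "0 \<le> \<epsilon>"
    and "\<And>x. x \<in> P \<Longrightarrow> A \<le> lo x \<and> lo x \<le> hi x \<and> hi x \<le> B"
    and "\<And>x y. x \<in> P \<Longrightarrow> y \<in> P \<Longrightarrow> t x < t y \<Longrightarrow> hi x \<le> lo y + \<epsilon>"
  shows "(\<Sum>x\<in>P. hi x - lo x) \<le> B - A + \<epsilon> * card P"
  using assms(1,2,3,5,6)
proof (induction P arbitrary: B rule: finite_ranking_induct[where f = t])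
  case empty
  then show ?case by simp
next
  case (insert x P)
  show ?case
  proof (cases "x \<in> P")
    case True
    then show ?thesis using insert by (simp add: insert_absorb)
  next
    case False
    have "t y < t x" if "y \<in> P" for y
      using insert.hyps(2)[OF that] insert.prems(1) False that
      by (metis insertCI inj_on_contraD order_le_less)
    then have "(\<Sum>y\<in>P. hi y - lo y) \<le> (lo x + \<epsilon>) - A + \<epsilon> * card P"
      using insert.prems \<open>0 \<le> \<epsilon>\<close>
      by (intro insert.IH) (force simp: inj_on_insert)+
    moreover have "hi x \<le> B"
      using insert.prems(3) by blast
    ultimately show ?thesis
      using False insert.hyps(1) by (simp add: algebra_simps)
  qed
qed

lemma quarter_root_sq:
  fixes R r h d :: real
  assumes "0 < R" "0 < r" "0 < h" "0 < d"
  shows "((R * r / (h^2 * d^2)) powr (1/4))^2 = sqrt (R * r) / (h * d)"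
proof -
  have "((R * r / (h^2 * d^2)) powr (1/4))^2 = (R * r / (h^2 * d^2)) powr (1/2)"
    unfolding power2_eq_square powr_add[symmetric] by simp
  also have "\<dots> = sqrt (R * r / (h * d)^2)"
    using assms by (simp add: powr_half_sqrt power_mult_distrib)
  also have "\<dots> = sqrt (R * r) / (h * d)"
    using assms by (simp add: real_sqrt_divide)
  finally show ?thesis .
qed

lemma sqrt_div_le_quarter_root:
  fixes R r h d :: real
  assumes "0 < r" "r \<le> R" "0 < h" "1 \<le> d"
  shows "sqrt r / (sqrt h * d) \<le> (R * r / (h^2 * d^2)) powr (1/4)"
proof (rule power2_le_imp_le)
  have "r = sqrt (r * r)" using assms(1) by simp
  also have "\<dots> \<le> sqrt (R * r)" using assms by (intro real_sqrt_le_mono mult_right_mono) auto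
  also have "\<dots> \<le> d * sqrt (R * r)"
    using mult_right_mono[OF assms(4), of "sqrt (R * r)"] assms by simp
  finally have "r / d \<le> sqrt (R * r)"
    using assms by (simp add: pos_divide_le_eq mult.commute)
  then have "(r / d) / (h * d) \<le> sqrt (R * r) / (h * d)"
    by (rule divide_right_mono) (use assms in simp)
  moreover have "(sqrt r / (sqrt h * d))^2 = (r / d) / (h * d)"
    using assms by (simp add: power_divide power_mult_distrib power2_eq_square)
  moreover have "((R * r / (h^2 * d^2)) powr (1/4))^2 = sqrt (R * r) / (h * d)"
    using assms by (intro quarter_root_sq) auto
  ultimately show "(sqrt r / (sqrt h * d))^2 \<le> ((R * r / (h^2 * d^2)) powr (1/4))^2"
    by linarith
qed simp

lemma quarter_root_le_third_root:
  fixes R r h d N :: real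
  assumes "0 < R" "0 < r" "0 < h" "0 < d" "0 < N"
    and "R powr (3/4) * d powr (1/2) * h powr (-1/2) * r powr (-1/4) \<le> N"
  shows "(R * r / (h^2 * d^2)) powr (1/4) \<le> (r * N / (h * d^2)) powr (1/3)"
proof -
  have "ln (R powr (3/4) * d powr (1/2) * h powr (-1/2) * r powr (-1/4)) \<le> ln N"
    using assms by (subst ln_le_cancel_iff) auto
  then have "(3/4) * ln R + (1/2) * ln d - (1/2) * ln h - (1/4) * ln r \<le> ln N"
    using assms by (simp add: ln_mult)
  moreover have "ln (R * r / (h^2 * d^2)) = ln R + ln r - 2 * ln h - 2 * ln d"
    using assms by (simp add: ln_mult ln_div ln_realpow)
  moreover have "ln (r * N / (h * d^2)) = ln r + ln N - ln h - 2 * ln d"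
    using assms by (simp add: ln_mult ln_div ln_realpow)
  ultimately have "(1/4) * ln (R * r / (h^2 * d^2)) \<le> (1/3) * ln (r * N / (h * d^2))"
    by linarith
  moreover have "0 < R * r / (h^2 * d^2)" "0 < r * N / (h * d^2)"
    using assms by simp_all
  ultimately show ?thesis
    using assms(1-5) unfolding powr_def by simp
qed

lemma min_le_sqrt_mult: "0 \<le> x \<Longrightarrow> 0 \<le> y \<Longrightarrow> min x y \<le> sqrt (x * y)"
proof -
  assume "0 \<le> x" "0 \<le> y"
  then have "min x y * min x y \<le> x * y" by (intro mult_mono) auto
  then show ?thesis by (simp add: real_le_rsqrt power2_eq_square)
qed

lemma nat_between_shifts:
  fixes q :: real
  assumes "0 < q"
  obtains m :: nat where "2 \<le> m" "q \<le> real m - 1" "real m \<le> q + 2"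
proof
  have "0 < \<lceil>q\<rceil>" using assms by simp
  then show "2 \<le> nat \<lceil>q\<rceil> + 1" by arith
  have "real (nat \<lceil>q\<rceil> + 1) = of_int \<lceil>q\<rceil> + 1" using \<open>0 < \<lceil>q\<rceil>\<close> by simp
  then show "q \<le> real (nat \<lceil>q\<rceil> + 1) - 1" "real (nat \<lceil>q\<rceil> + 1) \<le> q + 2"
    using ceiling_correct[of q] by linarith+
qed

lemma split_bound_at_balanced_m:
  fixes R r h d N L c S :: real
  assumes pos: "0 < r" "r \<le> R" "1 \<le> h" "1 \<le> d" "10 \<le> N" "0 \<le> c"
    and len: "(N - 1) * d \<le> L"
    and split: "\<And>m::nat. 2 \<le> m \<Longrightarrow>
      S \<le> sqrt (R * r) * c * (real m / (h * L) + 2 * N / (R * ((real m - 1) * d)))"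
  defines "Y \<equiv> (R * r / (h^2 * d^2)) powr (1/4)"
  shows "S \<le> c * (4 * Y) + (20/9) * c * Y^2 / N"
proof -
  define Z where "Z = sqrt r / (sqrt h * d)"
  have Y2: "Y^2 = sqrt (R * r) / (h * d)"
    unfolding Y_def using pos by (intro quarter_root_sq) auto
  have Z: "0 \<le> Z" "Z \<le> Y"
    unfolding Y_def Z_def using pos by (auto intro: sqrt_div_le_quarter_root)
  \<comment> \<open>m - 1 \<approx> N sqrt (h / R) balances the two terms of the split.\<close>
  define q where "q = N * sqrt h / sqrt R"
  have q: "0 < q" using pos by (simp add: q_def)
  obtain m where m: "2 \<le> m" "q \<le> real m - 1" "real m \<le> q + 2"
    using nat_between_shifts[OF q] .
  have "(9/10) * N * d \<le> (N - 1) * d"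
    using pos by (intro mult_right_mono) auto
  with len have "(9/10) * N * d \<le> L" by linarith
  then have "sqrt (R * r) * (real m / (h * L)) \<le> sqrt (R * r) * ((q + 2) / (h * ((9/10) * N * d)))"
    using pos m by (intro mult_left_mono frac_le) auto
  also have "\<dots> = (10/9) * (Z + 2 * Y^2 / N)"
    using pos unfolding Y2 Z_def q_def by (simp add: field_simps real_sqrt_mult)
  finally have first: "sqrt (R * r) * (real m / (h * L)) \<le> (10/9) * (Z + 2 * Y^2 / N)" .
  have "sqrt (R * r) * (2 * N / (R * ((real m - 1) * d))) \<le> sqrt (R * r) * (2 * N / (R * (q * d)))"
    using pos m q by (intro mult_left_mono frac_le mult_right_mono) auto
  also have "\<dots> = 2 * Z"
    using pos unfolding Z_def q_def by (simp add: field_simps real_sqrt_mult)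
  finally have second: "sqrt (R * r) * (2 * N / (R * ((real m - 1) * d))) \<le> 2 * Z" .
  have "S \<le> c * (sqrt (R * r) * (real m / (h * L)) + sqrt (R * r) * (2 * N / (R * ((real m - 1) * d))))"
    using split[OF m(1)] by (simp add: algebra_simps)
  also have "\<dots> \<le> c * ((10/9) * (Z + 2 * Y^2 / N) + 2 * Z)"
    using first second pos by (intro mult_left_mono add_mono) auto
  also have "\<dots> = c * ((28/9) * Z) + (20/9) * c * Y^2 / N"
    by (simp add: algebra_simps)
  also have "\<dots> \<le> c * (4 * Y) + (20/9) * c * Y^2 / N"
    using Z pos by (intro add_right_mono mult_left_mono) auto
  finally show ?thesis .
qed

lemma quarter_root_bound_of_split:
  fixes R r h d N L c K S :: real
  assumes pos: "0 < r" "r \<le> R" "1 \<le> h" "1 \<le> d" "10 \<le> N" "0 \<le> c" "0 \<le> K"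
    and len: "(N - 1) * d \<le> L"
    and crude: "S \<le> K * N"
    and split: "\<And>m::nat. 2 \<le> m \<Longrightarrow>
      S \<le> sqrt (R * r) * c * (real m / (h * L) + 2 * N / (R * ((real m - 1) * d)))"
  shows "S \<le> (4 * c + sqrt (3 * c * K)) * (R * r / (h^2 * d^2)) powr (1/4)"
proof -
  define Y where "Y = (R * r / (h^2 * d^2)) powr (1/4)"
  have "min (K * N) ((20/9) * c * Y^2 / N) \<le> sqrt (K * N * ((20/9) * c * Y^2 / N))"
    using pos by (intro min_le_sqrt_mult) auto
  also have "\<dots> \<le> sqrt (3 * c * K * Y^2)"
    using pos by (intro real_sqrt_le_mono) (simp add: field_simps)
  also have "\<dots> = sqrt (3 * c * K) * Y"
    by (simp add: Y_def real_sqrt_mult)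
  finally have min_le: "min (K * N) ((20/9) * c * Y^2 / N) \<le> sqrt (3 * c * K) * Y" .
  have "0 \<le> c * (4 * Y)" using pos by (simp add: Y_def)
  then have "S \<le> c * (4 * Y) + min (K * N) ((20/9) * c * Y^2 / N)"
    using split_bound_at_balanced_m[OF pos(1-6) len split] crude unfolding Y_def by linarith
  moreover have "(4 * c + sqrt (3 * c * K)) * Y = c * (4 * Y) + sqrt (3 * c * K) * Y"
    by (simp add: algebra_simps)
  ultimately show ?thesis
    using min_le unfolding Y_def by linarith
qed

lemma div_le_sq_mult_quarter_root:
  fixes R r h d H :: real
  assumes "10 \<le> r" "r \<le> R" "sqrt R \<le> h" "h < H" "1 \<le> d"
  shows "r / d \<le> H^2 * (R * r / (h^2 * d^2)) powr (1/4)"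
proof -
  have h: "1 \<le> h" using assms(1-3) real_sqrt_ge_one[of R] by linarith
  have Z: "0 \<le> sqrt r / (sqrt h * d)" "sqrt r / (sqrt h * d) \<le> (R * r / (h^2 * d^2)) powr (1/4)"
    using assms h by (auto intro!: sqrt_div_le_quarter_root)
  have "r / d = sqrt r * sqrt h * (sqrt r / (sqrt h * d))"
    using assms(1,5) h by (simp add: field_simps)
  also have "\<dots> \<le> (H * H) * (R * r / (h^2 * d^2)) powr (1/4)"
  proof (rule mult_mono)
    show "sqrt r * sqrt h \<le> H * H"
    proof (rule mult_mono)
      show "sqrt r \<le> H" using assms(2-4) real_sqrt_le_mono[of r R] by linarith
      show "sqrt h \<le> H" using assms(4) h real_sqrt_le_mono[of h "h^2"] by (simp add: power2_eq_square)
    qed (use h assms(4) in auto)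
  qed (use Z h assms(4) in auto)
  finally show ?thesis by (simp add: power2_eq_square)
qed

lemma few_points_bound:
  fixes R r h d N L \<rho> H :: real
  assumes "10 \<le> r" "r \<le> R" "sqrt R \<le> h" "h < H" "1 \<le> d" "0 < \<rho>" "10 \<le> N"
    and "N \<le> L / d + 1" "L \<le> 2 * (r + 1) / \<rho>"
  shows "N \<le> 3 * H^2 / \<rho> * (R * r / (h^2 * d^2)) powr (1/4)"
proof -
  define Y where "Y = (R * r / (h^2 * d^2)) powr (1/4)"
  have "9 \<le> L / d" using assms(7,8) by linarith
  then have "N \<le> (10/9) * (L / d)" using assms(8) by linarith
  also have "\<dots> \<le> (10/9) * ((2 * (r + 1) / \<rho>) / d)"
    using assms(5,9) by (intro mult_left_mono divide_right_mono) auto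
  also have "\<dots> \<le> (10/9) * ((2 * ((11/10) * r) / \<rho>) / d)"
    using assms(1,5,6) by (intro mult_left_mono divide_right_mono) auto
  also have "\<dots> = (22/9) / \<rho> * (r / d)"
    by (simp add: field_simps)
  also have "\<dots> \<le> (22/9) / \<rho> * (H^2 * Y)"
    using div_le_sq_mult_quarter_root[OF assms(1-5)] assms(6) by (intro mult_left_mono) (auto simp: Y_def)
  also have "\<dots> \<le> 3 / \<rho> * (H^2 * Y)"
    using assms(6) by (intro mult_right_mono divide_right_mono) (auto simp: Y_def)
  finally show ?thesis by (simp add: Y_def)
qed

section \<open>Chords over a lattice segment in the annulus\<close>

locale planar_body =
  fixes \<Omega> :: "(real^2) set" and \<rho>0 \<rho>1 K :: real
  assumes inradius: "0 < \<rho>0" "cball 0 \<rho>0 \<subseteq> \<Omega>"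
    and outradius: "\<Omega> \<subseteq> cball 0 \<rho>1"
    and mu_bound: "0 \<le> K" "\<And>\<theta> \<delta>. norm \<theta> = 1 \<Longrightarrow> 0 < \<delta> \<Longrightarrow> \<delta> powr (-1/2) * mu \<Omega> \<theta> \<delta> \<le> K"
begin

lemma bounded: "bounded \<Omega>"
  using outradius bounded_cball bounded_subset by blast

lemma nonempty: "\<Omega> \<noteq> {}"
  using inradius by auto

lemma inradius_le_outradius: "\<rho>0 \<le> \<rho>1"
proof -
  obtain x :: "real^2" where "norm x = \<rho>0"
    using vector_choose_size inradius(1) by (metis less_imp_le)
  then have "x \<in> \<Omega>" using inradius(2) by auto
  then show ?thesis using outradius \<open>norm x = \<rho>0\<close> by auto
qed

lemma closure_subset_outer_ball: "closure \<Omega> \<subseteq> cball 0 \<rho>1"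
  using outradius by (rule closure_minimal) simp

text \<open>3 \<rho>1/\<rho>0 compares chord lengths with slope spreads, K sqrt \<rho>1 bounds each
  term sqrt (R r) mu, and h \<ge> 4/\<rho>0 is the threshold above which the splitting argument applies.\<close>
definition bound_const :: real where
  "bound_const = 4 * (3 * \<rho>1 / \<rho>0) + sqrt (3 * (3 * \<rho>1 / \<rho>0) * (K * sqrt \<rho>1))
     + K * sqrt \<rho>1 * (3 * (4 / \<rho>0)^2 / \<rho>0)"

lemma bound_const_pos: "0 < bound_const"
proof -
  have "0 < \<rho>0" "0 < \<rho>1" "0 \<le> K"
    using inradius inradius_le_outradius mu_bound(1) by simp_all
  then show ?thesis
    unfolding bound_const_def by (intro add_pos_nonneg) auto
qed

end

locale lattice_segment = planar_body +
  fixes r R h :: real and a b :: "real^2"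
  assumes params: "10 \<le> r" "r \<le> R" "sqrt R \<le> h" "h \<le> R"
    and lattice_ends: "a \<in> Z2" "b \<in> Z2"
    and card_pts_ge: "10 \<le> card (closed_segment a b \<inter> Z2)"
    and dilate9_subset: "dilate9 a b \<subseteq> annulus \<Omega> r h"
begin

abbreviation "pts \<equiv> closed_segment a b \<inter> Z2"
abbreviation "gap \<equiv> lattice_gap pts"
abbreviation "len \<equiv> norm (b - a)"

definition "u = (1 / len) *\<^sub>R (b - a)"

definition "param l = inner (l - a) u"

definition "chord l =
  {x \<in> frontier \<Omega>. inner x ((1 / norm l) *\<^sub>R l) = rho_star \<Omega> ((1 / norm l) *\<^sub>R l) - 1 / (R * norm l)}"

lemma finite_pts: "finite pts"
  using card_pts_ge card.infinite by force

lemma a_ne_b: "a \<noteq> b"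
proof
  assume "a = b"
  then have "card pts \<le> card {a}" by (intro card_mono) auto
  then show False using card_pts_ge by simp
qed

lemma ends_in_pts: "a \<in> pts" "b \<in> pts"
  using lattice_ends by auto

lemma len_ge_1: "1 \<le> len"
  using Z2_norm_diff_ge_1[OF lattice_ends(2,1)] a_ne_b by auto

lemma norm_u: "norm u = 1"
  using a_ne_b by (simp add: u_def)

lemma pts_param:
  assumes "l \<in> pts"
  shows "l = a + param l *\<^sub>R u" "0 \<le> param l" "param l \<le> len"
  using closed_segment_unit_param[OF _ a_ne_b, of l] assms unfolding param_def u_def by auto

lemma dist_pts:
  assumes "p \<in> pts" "q \<in> pts"
  shows "dist p q = \<bar>param p - param q\<bar>"
proof -
  have "p - q = (param p - param q) *\<^sub>R u"
    using pts_param(1)[OF assms(1)] pts_param(1)[OF assms(2)] by (metis add_diff_cancel_left scaleR_diff_left)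
  then show ?thesis
    using norm_u by (simp add: dist_norm)
qed

lemma gap_le_dist: "p \<in> pts \<Longrightarrow> q \<in> pts \<Longrightarrow> p \<noteq> q \<Longrightarrow> gap \<le> dist p q"
  unfolding lattice_gap_def by (rule cInf_lower) (auto intro: bdd_belowI[where m = 0])

lemma gap_ge_1: "1 \<le> gap"
  unfolding lattice_gap_def
proof (rule cInf_greatest)
  show "{dist p q | p q. p \<in> pts \<and> q \<in> pts \<and> p \<noteq> q} \<noteq> {}"
    using ends_in_pts a_ne_b by blast
  show "1 \<le> x" if "x \<in> {dist p q | p q. p \<in> pts \<and> q \<in> pts \<and> p \<noteq> q}" for x
    using that Z2_norm_diff_ge_1 by (auto simp: dist_norm)
qed

lemma h_ge_1: "1 \<le> h"
  using params real_sqrt_ge_one[of R] by linarith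

lemma R_pos: "0 < R"
  using params by linarith

lemma rho_star_dilate9:
  assumes "-4 * len \<le> s" "s \<le> 5 * len"
  shows "r \<le> rho_star \<Omega> (a + s *\<^sub>R u)" "rho_star \<Omega> (a + s *\<^sub>R u) \<le> r + 1 / h"
proof -
  have "a + s *\<^sub>R u = a + (s / len) *\<^sub>R (b - a)"
    by (simp add: u_def)
  moreover have "-4 \<le> s / len" "s / len \<le> 5"
    using assms len_ge_1 by (simp_all add: le_divide_eq divide_le_eq)
  ultimately have "a + s *\<^sub>R u \<in> annulus \<Omega> r h"
    using add_scaleR_diff_mem_dilate9 dilate9_subset by auto
  then show "r \<le> rho_star \<Omega> (a + s *\<^sub>R u)" "rho_star \<Omega> (a + s *\<^sub>R u) \<le> r + 1 / h"
    by (simp_all add: annulus_def)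
qed

lemma rho_star_pts:
  assumes "l \<in> pts"
  shows "r \<le> rho_star \<Omega> l" "rho_star \<Omega> l \<le> r + 1 / h"
  using rho_star_dilate9[of "param l"] pts_param[OF assms] len_ge_1 by auto

lemma norm_pts:
  assumes "l \<in> pts"
  shows "r / \<rho>1 \<le> norm l" "norm l \<le> (r + 1) / \<rho>0"
proof -
  have "r \<le> \<rho>1 * norm l"
    using rho_star_pts[OF assms] rho_star_le_outradius[OF outradius nonempty, of l] by linarith
  then show "r / \<rho>1 \<le> norm l"
    using inradius inradius_le_outradius by (simp add: field_simps)
  have "1 / h \<le> 1" using h_ge_1 by simp
  then have "\<rho>0 * norm l \<le> r + 1"
    using rho_star_pts[OF assms] rho_star_ge_inradius[OF bounded inradius(2), of l] inradius(1)
    by linarith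
  then show "norm l \<le> (r + 1) / \<rho>0"
    using inradius by (simp add: field_simps)
qed

lemma norm_pts_pos: "l \<in> pts \<Longrightarrow> 0 < norm l"
  using norm_pts(1)[of l] params(1) inradius inradius_le_outradius
  by (smt (verit) divide_pos_pos)

lemma mu_eq_diameter_chord: "mu \<Omega> ((1 / norm l) *\<^sub>R l) (1 / (R * norm l)) = diameter (chord l)"
  by (simp add: mu_def chord_def)

lemma chord_subset_closure: "chord l \<subseteq> closure \<Omega>"
  by (auto simp: chord_def frontier_def)

lemma inner_chord:
  assumes "l \<in> pts" "p \<in> chord l"
  shows "inner p l = rho_star \<Omega> l - 1 / R"
proof -
  define \<theta> where "\<theta> = (1 / norm l) *\<^sub>R l"
  have n: "0 < norm l" using norm_pts_pos[OF assms(1)] .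
  then have l: "l = norm l *\<^sub>R \<theta>" by (simp add: \<theta>_def)
  have "inner p \<theta> = rho_star \<Omega> \<theta> - 1 / (R * norm l)"
    using assms(2) unfolding chord_def \<theta>_def by blast
  then have "inner p l = norm l * rho_star \<Omega> \<theta> - norm l / (R * norm l)"
    by (subst l) (simp add: right_diff_distrib)
  also have "\<dots> = rho_star \<Omega> l - 1 / R"
    using n by (subst (2) l) (simp add: rho_star_scaleR[OF bounded nonempty n])
  finally show ?thesis .
qed

lemma chord_inner_le_rho_star: "p \<in> chord l \<Longrightarrow> inner p y \<le> rho_star \<Omega> y"
  using inner_le_rho_star[OF bounded] chord_subset_closure by blast

lemma chord_norm_le: "p \<in> chord l \<Longrightarrow> norm p \<le> \<rho>1"
  using chord_subset_closure closure_subset_outer_ball by fastforce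

lemma chord_inner_along_segment:
  assumes "l \<in> pts" "p \<in> chord l"
  shows "rho_star \<Omega> l - 1 / R + (s - param l) * inner p u \<le> rho_star \<Omega> (a + s *\<^sub>R u)"
proof -
  have "a + s *\<^sub>R u = l + (s - param l) *\<^sub>R u"
    using pts_param(1)[OF assms(1)] by (simp add: algebra_simps)
  then have "inner p (a + s *\<^sub>R u) = inner p l + (s - param l) * inner p u"
    by (simp add: inner_add_right)
  then show ?thesis
    using inner_chord[OF assms] chord_inner_le_rho_star[OF assms(2)] by metis
qed

text \<open>p is almost a supporting point at l + 4 len u and at l - 4 len u, which lie in the
  ninefold dilate and hence in the thin annulus.\<close>
lemma chord_slope_bound:
  assumes "l \<in> pts" "p \<in> chord l"
  shows "\<bar>inner p u\<bar> \<le> 1 / (2 * h * len)"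
proof -
  have t: "0 \<le> param l" "param l \<le> len" using pts_param[OF assms(1)] by auto
  have "1 / R \<le> 1 / h" using params h_ge_1 by (simp add: frac_le)
  moreover have "rho_star \<Omega> l - 1 / R + (4 * len) * inner p u \<le> r + 1 / h"
    using chord_inner_along_segment[OF assms, of "param l + 4 * len"]
      rho_star_dilate9(2)[of "param l + 4 * len"] t by auto
  moreover have "rho_star \<Omega> l - 1 / R - (4 * len) * inner p u \<le> r + 1 / h"
    using chord_inner_along_segment[OF assms, of "param l - 4 * len"]
      rho_star_dilate9(2)[of "param l - 4 * len"] t len_ge_1 by auto
  ultimately have "4 * len * \<bar>inner p u\<bar> \<le> 2 / h"
    using rho_star_pts(1)[OF assms(1)] by (simp add: abs_if)
  then have "\<bar>inner p u\<bar> * (2 * h * len) \<le> 1"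
    using h_ge_1 by (simp add: field_simps)
  moreover have "0 < 2 * h * len"
    using len_ge_1 h_ge_1 by (intro mult_pos_pos) auto
  ultimately show ?thesis
    by (simp only: pos_le_divide_eq)
qed

text \<open>Monotonicity of the Gauss map, up to the error 1/R in the definition of the chords.\<close>
lemma chord_slopes_monotone:
  assumes "l \<in> pts" "p \<in> chord l" "l' \<in> pts" "q \<in> chord l'"
  shows "(param l' - param l) * (inner p u - inner q u) \<le> 2 / R"
proof -
  have "rho_star \<Omega> l - 1 / R + (param l' - param l) * inner p u \<le> rho_star \<Omega> l'"
    using chord_inner_along_segment[OF assms(1,2), of "param l'"] pts_param[OF assms(3)] by auto
  moreover have "rho_star \<Omega> l' - 1 / R + (param l - param l') * inner q u \<le> rho_star \<Omega> l"
    using chord_inner_along_segment[OF assms(3,4), of "param l"] pts_param[OF assms(1)] by auto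
  ultimately show ?thesis by (simp add: algebra_simps)
qed

lemma sqrt_Rr_diameter_chord_le:
  assumes "l \<in> pts"
  shows "sqrt (R * r) * diameter (chord l) \<le> K * sqrt \<rho>1"
proof -
  have n: "0 < norm l" using norm_pts_pos[OF assms] .
  have "norm ((1 / norm l) *\<^sub>R l) = 1" "0 < 1 / (R * norm l)"
    using n R_pos by simp_all
  then have "(1 / (R * norm l)) powr (-1/2) * diameter (chord l) \<le> K"
    using mu_bound(2) mu_eq_diameter_chord by metis
  moreover have "(1 / (R * norm l)) powr (-1/2) = sqrt (R * norm l)"
    using n R_pos by (simp add: powr_minus_divide powr_half_sqrt[symmetric] powr_divide)
  ultimately have K: "sqrt (R * norm l) * diameter (chord l) \<le> K" by simp
  have "bounded (chord l)"
    using chord_norm_le by (meson bounded_iff)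
  then have D: "0 \<le> diameter (chord l)"
    by (rule diameter_ge_0)
  have "r / norm l \<le> \<rho>1"
    using norm_pts(1)[OF assms] n inradius inradius_le_outradius by (simp add: field_simps)
  then have sq: "sqrt (r / norm l) \<le> sqrt \<rho>1"
    by (rule real_sqrt_le_mono)
  have "sqrt (R * r) = sqrt (r / norm l) * sqrt (R * norm l)"
    using n by (simp add: real_sqrt_mult[symmetric])
  then have "sqrt (R * r) * diameter (chord l) = sqrt (r / norm l) * (sqrt (R * norm l) * diameter (chord l))"
    by simp
  also have "\<dots> \<le> sqrt \<rho>1 * K"
    using sq K D n R_pos inradius(1) inradius_le_outradius by (intro mult_mono) auto
  finally show ?thesis by (simp add: mult.commute)
qed

definition "slopes l = (\<lambda>p. inner p u) ` chord l"

definition "spread l = Sup (slopes l) - Inf (slopes l)"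

lemma slopes_bound:
  assumes "l \<in> pts" "y \<in> slopes l"
  shows "- (1 / (2 * h * len)) \<le> y" "y \<le> 1 / (2 * h * len)"
proof -
  obtain p where "p \<in> chord l" "y = inner p u"
    using assms(2) unfolding slopes_def by blast
  then have "\<bar>y\<bar> \<le> 1 / (2 * h * len)"
    using chord_slope_bound[OF assms(1)] by simp
  then show "- (1 / (2 * h * len)) \<le> y" "y \<le> 1 / (2 * h * len)"
    by (simp_all add: abs_le_iff)
qed

lemma bdd_slopes: "l \<in> pts \<Longrightarrow> bdd_above (slopes l)" "l \<in> pts \<Longrightarrow> bdd_below (slopes l)"
  using slopes_bound by (meson bdd_aboveI bdd_belowI)+

lemma slopes_Inf_Sup:
  assumes "l \<in> pts" "chord l \<noteq> {}"
  shows "- (1 / (2 * h * len)) \<le> Inf (slopes l)" "Inf (slopes l) \<le> Sup (slopes l)"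
    "Sup (slopes l) \<le> 1 / (2 * h * len)"
proof -
  have ne: "slopes l \<noteq> {}" using assms(2) by (simp add: slopes_def)
  show "- (1 / (2 * h * len)) \<le> Inf (slopes l)" "Sup (slopes l) \<le> 1 / (2 * h * len)"
    using slopes_bound[OF assms(1)] ne by (auto intro: cInf_greatest cSup_least)
  show "Inf (slopes l) \<le> Sup (slopes l)"
    using ne bdd_slopes[OF assms(1)] by (rule cInf_le_cSup)
qed

lemma slope_diff_le_spread:
  assumes "l \<in> pts" "p \<in> chord l" "q \<in> chord l"
  shows "\<bar>inner p u - inner q u\<bar> \<le> spread l"
proof -
  have "inner x u \<le> Sup (slopes l)" "Inf (slopes l) \<le> inner x u" if "x \<in> chord l" for x
    using that bdd_slopes[OF assms(1)] by (auto simp: slopes_def intro: cSup_upper cInf_lower)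
  then show ?thesis
    using assms(2,3) by (fastforce simp: spread_def abs_le_iff)
qed

lemma chord_slope_le_inradius:
  assumes "4 / \<rho>0 \<le> h" "l \<in> pts" "p \<in> chord l"
  shows "\<bar>inner p u\<bar> \<le> \<rho>0 / 8"
proof -
  have "8 / \<rho>0 \<le> 2 * h * 1"
    using assms(1) by simp
  also have "\<dots> \<le> 2 * h * len"
    using h_ge_1 len_ge_1 by (intro mult_left_mono) auto
  finally have "1 / (2 * h * len) \<le> 1 / (8 / \<rho>0)"
    using inradius(1) by (intro frac_le) auto
  then have "\<bar>inner p u\<bar> \<le> 1 / (8 / \<rho>0)"
    using chord_slope_bound[OF assms(2,3)] by linarith
  then show ?thesis by simp
qed

text \<open>Since u is a unit vector, \<bar>det2 l u\<bar> = \<bar>det2 a u\<bar> is the distance of the line through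
  the segment from the origin; it is comparable to r once h is large.\<close>
lemma abs_det2_a_u_ge:
  assumes "4 / \<rho>0 \<le> h" "l \<in> pts" "p \<in> chord l"
  shows "r / (2 * \<rho>1) \<le> \<bar>det2 a u\<bar>"
proof -
  have det_l: "det2 l u = det2 a u"
    using pts_param(1)[OF assms(2)] det2_add_scaleR_left by metis
  have "1 / R \<le> 1 / 10"
    using params by (simp add: frac_le)
  then have "r - 1/10 \<le> inner p l"
    using inner_chord[OF assms(2,3)] rho_star_pts(1)[OF assms(2)] by linarith
  also have "inner p l = inner p u * inner l u + det2 a u * det2 p u"
    using inner_eq_unit_coords[OF norm_u, of p l] det_l by simp
  also have "\<dots> \<le> \<bar>inner p u\<bar> * \<bar>inner l u\<bar> + \<bar>det2 a u\<bar> * \<bar>det2 p u\<bar>"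
    unfolding abs_mult[symmetric] by (intro add_mono abs_ge_self)
  finally have sum: "r - 1/10 \<le> \<bar>inner p u\<bar> * \<bar>inner l u\<bar> + \<bar>det2 a u\<bar> * \<bar>det2 p u\<bar>" .
  have "\<bar>inner l u\<bar> \<le> (r + 1) / \<rho>0"
    using Cauchy_Schwarz_ineq2[of l u] norm_u norm_pts(2)[OF assms(2)] by simp
  then have "\<bar>inner p u\<bar> * \<bar>inner l u\<bar> \<le> (\<rho>0 / 8) * ((r + 1) / \<rho>0)"
    using chord_slope_le_inradius[OF assms] by (intro mult_mono) auto
  also have "\<dots> = r / 8 + 1 / 8"
    using inradius(1) by (simp add: field_simps)
  finally have "\<bar>inner p u\<bar> * \<bar>inner l u\<bar> \<le> r / 8 + 1 / 8" .
  moreover have "\<bar>det2 p u\<bar> \<le> norm p"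
    using norm_sq_eq_unit_coords[OF norm_u, of p] power2_le_iff_abs_le[of "norm p" "det2 p u"]
    by simp
  then have "\<bar>det2 a u\<bar> * \<bar>det2 p u\<bar> \<le> \<bar>det2 a u\<bar> * \<rho>1"
    using chord_norm_le[OF assms(3)] by (intro mult_left_mono) auto
  ultimately have "r / 2 \<le> \<bar>det2 a u\<bar> * \<rho>1"
    using sum params(1) by linarith
  then show ?thesis
    using inradius inradius_le_outradius by (simp add: field_simps)
qed

lemma norm_diff_chord_eq:
  assumes "l \<in> pts" "p \<in> chord l" "q \<in> chord l"
  shows "norm (p - q) * \<bar>det2 a u\<bar> = \<bar>inner (p - q) u\<bar> * norm l"
proof -
  define w where "w = p - q"
  define D where "D = det2 a u"
  have det_l: "det2 l u = D"
    using pts_param(1)[OF assms(1)] det2_add_scaleR_left unfolding D_def by metis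
  have "inner w l = 0"
    using inner_chord[OF assms(1,2)] inner_chord[OF assms(1,3)] by (simp add: w_def inner_diff_left)
  then have orth: "D * det2 w u = - (inner w u * inner l u)"
    using inner_eq_unit_coords[OF norm_u, of w l] det_l by simp
  have "(norm w * \<bar>D\<bar>)^2 = (inner w u)^2 * D^2 + (D * det2 w u)^2"
    using norm_sq_eq_unit_coords[OF norm_u, of w] by (simp add: power_mult_distrib algebra_simps)
  also have "\<dots> = (inner w u)^2 * ((inner l u)^2 + D^2)"
    unfolding orth by (simp add: power_mult_distrib algebra_simps)
  also have "\<dots> = (\<bar>inner w u\<bar> * norm l)^2"
    using norm_sq_eq_unit_coords[OF norm_u, of l] det_l by (simp add: power_mult_distrib)
  finally show ?thesis
    unfolding w_def[symmetric] D_def[symmetric] by (simp add: power2_eq_iff_nonneg)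
qed

lemma diameter_chord_le_spread:
  assumes "4 / \<rho>0 \<le> h" "l \<in> pts" "chord l \<noteq> {}"
  shows "diameter (chord l) \<le> (3 * \<rho>1 / \<rho>0) * spread l"
proof -
  obtain p0 where "p0 \<in> chord l" using assms(3) by blast
  note D = abs_det2_a_u_ge[OF assms(1,2) this]
  have "0 < r / (2 * \<rho>1)"
    using params(1) inradius inradius_le_outradius by simp
  with D have D_pos: "0 < \<bar>det2 a u\<bar>" by linarith
  have spread: "0 \<le> spread l"
    using slopes_Inf_Sup(2)[OF assms(2,3)] by (simp add: spread_def)
  have "norm (p - q) \<le> (3 * \<rho>1 / \<rho>0) * spread l" if "p \<in> chord l" "q \<in> chord l" for p q
  proof -
    have "norm (p - q) * \<bar>det2 a u\<bar> = \<bar>inner p u - inner q u\<bar> * norm l"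
      using norm_diff_chord_eq[OF assms(2) that] by (simp add: inner_diff_left)
    also have "\<dots> \<le> spread l * ((r + 1) / \<rho>0)"
      using slope_diff_le_spread[OF assms(2) that] norm_pts(2)[OF assms(2)] spread
      by (intro mult_mono) auto
    also have "\<dots> \<le> spread l * ((3 * \<rho>1 / \<rho>0) * (r / (2 * \<rho>1)))"
      using spread params(1) inradius inradius_le_outradius
      by (intro mult_left_mono) (simp_all add: field_simps)
    also have "\<dots> \<le> spread l * ((3 * \<rho>1 / \<rho>0) * \<bar>det2 a u\<bar>)"
      using spread D inradius inradius_le_outradius by (intro mult_left_mono) auto
    finally have "norm (p - q) * \<bar>det2 a u\<bar> \<le> ((3 * \<rho>1 / \<rho>0) * spread l) * \<bar>det2 a u\<bar>"
      by (simp add: algebra_simps)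
    then show ?thesis
      using D_pos by (rule mult_right_le_imp_le)
  qed
  then show ?thesis
    using assms(3) by (intro diameter_le) (auto simp: dist_norm)
qed

lemma gap_le_param_diff:
  assumes "l \<in> pts" "l' \<in> pts" "l \<noteq> l'"
  shows "gap \<le> \<bar>param l - param l'\<bar>"
  using gap_le_dist[OF assms] dist_pts[OF assms(1,2)] by simp

lemma inj_on_param: "inj_on param pts"
proof (rule inj_onI, rule ccontr)
  fix x y assume "x \<in> pts" "y \<in> pts" "param x = param y" "x \<noteq> y"
  then show False
    using gap_le_param_diff[of x y] gap_ge_1 by simp
qed

definition "cell l = nat \<lfloor>param l / gap\<rfloor>"

lemma cell_bounds:
  assumes "l \<in> pts"
  shows "real (cell l) * gap \<le> param l" "param l < real (cell l) * gap + gap"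
proof -
  have "0 \<le> param l / gap" using pts_param(2)[OF assms] gap_ge_1 by simp
  then have "real (cell l) = of_int \<lfloor>param l / gap\<rfloor>" by (simp add: cell_def)
  then have "real (cell l) \<le> param l / gap" "param l / gap < real (cell l) + 1"
    by linarith+
  then show "real (cell l) * gap \<le> param l" "param l < real (cell l) * gap + gap"
    using gap_ge_1 by (simp_all add: field_simps)
qed

lemma cell_less:
  assumes "l \<in> pts" "l' \<in> pts" "param l < param l'"
  shows "cell l < cell l'"
proof -
  have "gap \<le> param l' - param l"
    using gap_le_param_diff[OF assms(1,2)] assms(3) by fastforce
  then have "real (cell l) * gap < real (cell l') * gap"
    using cell_bounds[OF assms(1)] cell_bounds[OF assms(2)] by linarith
  then show ?thesis
    using gap_ge_1 by (simp add: mult_less_cancel_right)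
qed

lemma param_diff_same_class:
  assumes "l \<in> pts" "l' \<in> pts" "param l < param l'" "cell l mod m = cell l' mod m"
  shows "(real m - 1) * gap \<le> param l' - param l"
proof -
  have less: "cell l < cell l'" using cell_less[OF assms(1-3)] .
  then have "m dvd cell l' - cell l"
    using assms(4) mod_eq_dvd_iff_nat[of "cell l" "cell l'" m] by simp
  then obtain k where k: "cell l' - cell l = m * k" ..
  with less have "k \<noteq> 0" by (intro notI) simp
  then have "m \<le> m * k" by simp
  with k less have "cell l + m \<le> cell l'" by linarith
  then have "(real (cell l) + real m) * gap \<le> real (cell l') * gap"
    using gap_ge_1 by (intro mult_right_mono) auto
  then show ?thesis
    using cell_bounds[OF assms(1)] cell_bounds[OF assms(2)] by (simp add: algebra_simps)
qed

lemma card_pts_le: "real (card pts) \<le> len / gap + 1"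
proof -
  have "inj_on cell pts"
  proof (rule inj_onI)
    fix x y assume xy: "x \<in> pts" "y \<in> pts" "cell x = cell y"
    show "x = y"
    proof (rule ccontr)
      assume "x \<noteq> y"
      then have "param x < param y \<or> param y < param x"
        using inj_on_param xy(1,2) by (metis inj_onD linorder_neq_iff)
      then show False
        using cell_less[OF xy(1,2)] cell_less[OF xy(2,1)] xy(3) by auto
    qed
  qed
  moreover have "cell l \<le> nat \<lfloor>len / gap\<rfloor>" if "l \<in> pts" for l
  proof -
    have "param l / gap \<le> len / gap"
      using pts_param(3)[OF that] gap_ge_1 by (simp add: divide_right_mono)
    then show ?thesis
      unfolding cell_def by (intro nat_mono floor_mono)
  qed
  then have "cell ` pts \<subseteq> {0..nat \<lfloor>len / gap\<rfloor>}"
    by auto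
  ultimately have "card pts \<le> card {0..nat \<lfloor>len / gap\<rfloor>}"
    by (intro card_inj_on_le) auto
  moreover have "real (nat \<lfloor>len / gap\<rfloor>) \<le> len / gap"
    using len_ge_1 gap_ge_1 by simp
  ultimately show ?thesis by simp
qed

lemma Sup_slopes_le_Inf_slopes:
  assumes "l \<in> pts" "l' \<in> pts" "chord l \<noteq> {}" "chord l' \<noteq> {}"
    and "0 < G" "G \<le> param l' - param l"
  shows "Sup (slopes l) \<le> Inf (slopes l') + 2 / (R * G)"
proof -
  have "inner p u - 2 / (R * G) \<le> inner q u" if "p \<in> chord l" "q \<in> chord l'" for p q
  proof (cases "inner p u \<le> inner q u")
    case True
    moreover have "0 \<le> 2 / (R * G)" using R_pos assms(5) by simp
    ultimately show ?thesis by linarith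
  next
    case False
    then have "G * (inner p u - inner q u) \<le> (param l' - param l) * (inner p u - inner q u)"
      using assms(6) by (intro mult_right_mono) auto
    also have "\<dots> \<le> 2 / R"
      using chord_slopes_monotone[OF assms(1) that(1) assms(2) that(2)] .
    finally show ?thesis
      using assms(5) R_pos by (simp add: field_simps)
  qed
  then have "inner p u - 2 / (R * G) \<le> Inf (slopes l')" if "p \<in> chord l" for p
    using that assms(4) unfolding slopes_def by (intro cInf_greatest) auto
  then show ?thesis
    using assms(3) unfolding slopes_def by (intro cSup_least) (auto simp: algebra_simps)
qed

text \<open>Ordered along the segment, the slope intervals of one residue class overlap by at most
  2 / (R (m - 1) gap), and all of them lie in an interval of length 1 / (h len).\<close>
lemma sum_spread_residue_class_le:
  fixes c :: nat
  assumes "2 \<le> m"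
  defines "P \<equiv> {l \<in> pts. chord l \<noteq> {} \<and> cell l mod m = c}"
  shows "(\<Sum>l\<in>P. spread l) \<le> 1 / (h * len) + 2 / (R * ((real m - 1) * gap)) * card P"
proof -
  have G: "0 < (real m - 1) * gap" using assms gap_ge_1 by simp
  have "(\<Sum>l\<in>P. Sup (slopes l) - Inf (slopes l))
      \<le> 1 / (2 * h * len) - - (1 / (2 * h * len)) + 2 / (R * ((real m - 1) * gap)) * card P"
  proof (rule sum_interval_lengths_le[where t = param])
    show "finite P"
      using finite_pts by (rule finite_subset[rotated]) (auto simp: P_def)
    show "inj_on param P"
      using inj_on_param by (rule inj_on_subset) (auto simp: P_def)
    show "- (1 / (2 * h * len)) \<le> 1 / (2 * h * len)"
      using h_ge_1 len_ge_1 by simp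
    show "0 \<le> 2 / (R * ((real m - 1) * gap))"
      using G R_pos by simp
    show "- (1 / (2 * h * len)) \<le> Inf (slopes l) \<and> Inf (slopes l) \<le> Sup (slopes l)
        \<and> Sup (slopes l) \<le> 1 / (2 * h * len)" if "l \<in> P" for l
      using that slopes_Inf_Sup by (auto simp: P_def)
    show "Sup (slopes l) \<le> Inf (slopes l') + 2 / (R * ((real m - 1) * gap))"
      if "l \<in> P" "l' \<in> P" "param l < param l'" for l l'
      using that param_diff_same_class[of l l' m] G
      unfolding P_def by (intro Sup_slopes_le_Inf_slopes) auto
  qed
  then show ?thesis by (simp add: spread_def)
qed

lemma sum_spread_le:
  assumes "2 \<le> m"
  shows "(\<Sum>l\<in>{l \<in> pts. chord l \<noteq> {}}. spread l)
    \<le> real m / (h * len) + 2 * card pts / (R * ((real m - 1) * gap))"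
proof -
  define P where "P = {l \<in> pts. chord l \<noteq> {}}"
  define \<epsilon> where "\<epsilon> = 2 / (R * ((real m - 1) * gap))"
  define cls where "cls c = {l \<in> P. cell l mod m = c}" for c
  have \<epsilon>: "0 \<le> \<epsilon>" using assms gap_ge_1 R_pos by (simp add: \<epsilon>_def)
  have group: "(\<Sum>c<m. \<Sum>l\<in>cls c. f l) = (\<Sum>l\<in>P. f l)" for f :: "real^2 \<Rightarrow> real"
    unfolding cls_def using assms finite_pts
    by (intro sum.group) (auto simp: P_def intro: finite_subset[rotated])
  have "(\<Sum>l\<in>P. spread l) = (\<Sum>c<m. \<Sum>l\<in>cls c. spread l)"
    by (rule group[symmetric])
  also have "\<dots> \<le> (\<Sum>c<m. 1 / (h * len) + \<epsilon> * card (cls c))"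
    using sum_spread_residue_class_le[OF assms] unfolding cls_def P_def \<epsilon>_def
    by (intro sum_mono) (simp add: conj_assoc)
  also have "\<dots> = real m / (h * len) + \<epsilon> * card P"
    using group[of "\<lambda>_. 1"] by (simp add: sum.distrib sum_distrib_left[symmetric])
  also have "\<dots> \<le> real m / (h * len) + \<epsilon> * card pts"
  proof -
    have "card P \<le> card pts" using finite_pts by (intro card_mono) (auto simp: P_def)
    then show ?thesis using \<epsilon> by (simp add: mult_left_mono)
  qed
  finally show ?thesis by (simp add: P_def \<epsilon>_def)
qed

lemma sum_diameter_chord_le_card:
  "sqrt (R * r) * (\<Sum>l\<in>pts. diameter (chord l)) \<le> K * sqrt \<rho>1 * card pts"
proof -
  have "sqrt (R * r) * (\<Sum>l\<in>pts. diameter (chord l)) = (\<Sum>l\<in>pts. sqrt (R * r) * diameter (chord l))"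
    by (simp add: sum_distrib_left)
  also have "\<dots> \<le> (\<Sum>l\<in>pts. K * sqrt \<rho>1)"
    by (intro sum_mono sqrt_Rr_diameter_chord_le)
  finally show ?thesis by (simp add: mult.commute)
qed

lemma sum_diameter_chord_le_split:
  assumes "4 / \<rho>0 \<le> h" "2 \<le> m"
  shows "sqrt (R * r) * (\<Sum>l\<in>pts. diameter (chord l))
    \<le> sqrt (R * r) * (3 * \<rho>1 / \<rho>0) * (real m / (h * len) + 2 * card pts / (R * ((real m - 1) * gap)))"
proof -
  have "(\<Sum>l\<in>pts. diameter (chord l)) = (\<Sum>l\<in>{l \<in> pts. chord l \<noteq> {}}. diameter (chord l))"
    using finite_pts by (intro sum.mono_neutral_right) auto
  also have "\<dots> \<le> (\<Sum>l\<in>{l \<in> pts. chord l \<noteq> {}}. (3 * \<rho>1 / \<rho>0) * spread l)"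
    using diameter_chord_le_spread[OF assms(1)] by (intro sum_mono) auto
  also have "\<dots> = (3 * \<rho>1 / \<rho>0) * (\<Sum>l\<in>{l \<in> pts. chord l \<noteq> {}}. spread l)"
    by (simp only: sum_distrib_left)
  also have "\<dots> \<le> (3 * \<rho>1 / \<rho>0) * (real m / (h * len) + 2 * card pts / (R * ((real m - 1) * gap)))"
    using sum_spread_le[OF assms(2)] inradius inradius_le_outradius by (intro mult_left_mono) auto
  finally have "(\<Sum>l\<in>pts. diameter (chord l))
    \<le> (3 * \<rho>1 / \<rho>0) * (real m / (h * len) + 2 * card pts / (R * ((real m - 1) * gap)))" .
  then show ?thesis
    unfolding mult.assoc by (rule mult_left_mono) (use R_pos params in simp)
qed

lemma len_le: "len \<le> 2 * (r + 1) / \<rho>0"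
proof -
  have "len \<le> norm b + norm a" by (rule norm_triangle_ineq4)
  also have "\<dots> \<le> (r + 1) / \<rho>0 + (r + 1) / \<rho>0"
    using norm_pts(2)[OF ends_in_pts(1)] norm_pts(2)[OF ends_in_pts(2)] by (rule add_mono[rotated])
  finally show ?thesis by simp
qed

lemma sum_diameter_chord_bound:
  "sqrt (R * r) * (\<Sum>l\<in>pts. diameter (chord l)) \<le> bound_const * (R * r / (h^2 * gap^2)) powr (1/4)"
proof -
  define S where "S = sqrt (R * r) * (\<Sum>l\<in>pts. diameter (chord l))"
  define Y where "Y = (R * r / (h^2 * gap^2)) powr (1/4)"
  define c where "c = 3 * \<rho>1 / \<rho>0"
  define K' where "K' = K * sqrt \<rho>1"
  have c: "0 \<le> c" and K': "0 \<le> K'" and Y: "0 \<le> Y"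
    using inradius inradius_le_outradius mu_bound(1) by (simp_all add: c_def K'_def Y_def)
  have crude: "S \<le> K' * card pts"
    using sum_diameter_chord_le_card by (simp add: S_def K'_def)
  have const: "bound_const * Y = (4 * c + sqrt (3 * c * K')) * Y + K' * (3 * (4 / \<rho>0)^2 / \<rho>0 * Y)"
    by (simp add: bound_const_def c_def K'_def algebra_simps)
  have "0 \<le> (4 * c + sqrt (3 * c * K')) * Y" "0 \<le> K' * (3 * (4 / \<rho>0)^2 / \<rho>0 * Y)"
    using c K' Y inradius(1) by simp_all
  moreover have "S \<le> K' * (3 * (4 / \<rho>0)^2 / \<rho>0 * Y)" if "h < 4 / \<rho>0"
  proof -
    have "real (card pts) \<le> 3 * (4 / \<rho>0)^2 / \<rho>0 * Y"
      unfolding Y_def using params that gap_ge_1 inradius(1) card_pts_ge card_pts_le len_le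
      by (intro few_points_bound) auto
    with crude K' show ?thesis
      by (meson mult_left_mono order.trans)
  qed
  moreover have "S \<le> (4 * c + sqrt (3 * c * K')) * Y" if "\<not> h < 4 / \<rho>0"
    unfolding S_def Y_def
  proof (rule quarter_root_bound_of_split)
    show "(real (card pts) - 1) * gap \<le> len"
      using card_pts_le gap_ge_1 by (simp add: field_simps)
    show "sqrt (R * r) * (\<Sum>l\<in>pts. diameter (chord l))
        \<le> sqrt (R * r) * c * (real m / (h * len) + 2 * real (card pts) / (R * ((real m - 1) * gap)))"
      if "2 \<le> m" for m
      using sum_diameter_chord_le_split[OF _ that] \<open>\<not> h < 4 / \<rho>0\<close> by (simp add: c_def)
  qed (use params h_ge_1 gap_ge_1 card_pts_ge c K' crude[unfolded S_def] in auto)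
  ultimately show ?thesis
    unfolding S_def[symmetric] Y_def[symmetric] const by linarith
qed

lemma sqrt_Rr_sum_mu_le:
  "sqrt (R * r) * (\<Sum>l\<in>pts. mu \<Omega> ((1 / norm l) *\<^sub>R l) (1 / (R * norm l)))
    \<le> bound_const * (R * r / (h^2 * gap^2)) powr (1/4)"
  using sum_diameter_chord_bound by (simp add: mu_eq_diameter_chord)

lemma sqrt_Rr_sum_mu_le_many_points:
  assumes "R powr (3/4) * gap powr (1/2) * h powr (-1/2) * r powr (-1/4) \<le> card pts"
  shows "sqrt (R * r) * (\<Sum>l\<in>pts. mu \<Omega> ((1 / norm l) *\<^sub>R l) (1 / (R * norm l)))
    \<le> bound_const * (r * card pts / (h * gap^2)) powr (1/3)"
proof -
  have "(R * r / (h^2 * gap^2)) powr (1/4) \<le> (r * card pts / (h * gap^2)) powr (1/3)"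
    using R_pos params h_ge_1 gap_ge_1 card_pts_ge assms by (intro quarter_root_le_third_root) auto
  then have "bound_const * (R * r / (h^2 * gap^2)) powr (1/4) \<le> bound_const * (r * card pts / (h * gap^2)) powr (1/3)"
    using bound_const_pos by (intro mult_left_mono) auto
  with sqrt_Rr_sum_mu_le show ?thesis by (rule order.trans)
qed

end

lemma planar_body_exists:
  assumes "bounded \<Omega>" "open \<Omega>" "0 \<in> \<Omega>"
    and "\<forall>\<theta>. norm \<theta> = 1 \<longrightarrow> (\<forall>\<delta>>0. \<delta> powr (-1/2) * mu \<Omega> \<theta> \<delta> \<le> K)"
  obtains \<rho>0 \<rho>1 where "planar_body \<Omega> \<rho>0 \<rho>1 (max K 0)"
proof -
  obtain \<rho>0 where "0 < \<rho>0" "cball 0 \<rho>0 \<subseteq> \<Omega>"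
    using assms(2,3) open_contains_cball by blast
  moreover obtain \<rho>1 where "\<forall>x\<in>\<Omega>. norm x \<le> \<rho>1"
    using assms(1) bounded_pos by blast
  then have "\<Omega> \<subseteq> cball 0 \<rho>1" by auto
  ultimately have "planar_body \<Omega> \<rho>0 \<rho>1 (max K 0)"
    using assms(4) by unfold_locales (auto intro: max.coboundedI1)
  then show ?thesis by (rule that)
qed

theorem lemma6p1:
  fixes \<Omega> :: "(real^2) set"
  assumes "bounded \<Omega>" "open \<Omega>" "convex \<Omega>" "0 \<in> \<Omega>"
    and "\<exists>K. \<forall>\<theta>. norm \<theta> = 1 \<longrightarrow> (\<forall>\<delta>>0. \<delta> powr (-1/2) * mu \<Omega> \<theta> \<delta> \<le> K)"
  shows "\<exists>C>0. \<forall>r R h a b.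
    10 \<le> r \<and> r \<le> R \<and> sqrt R \<le> h \<and> h \<le> R \<and> a \<in> Z2 \<and> b \<in> Z2 \<and>
    card (closed_segment a b \<inter> Z2) \<ge> 10 \<and> dilate9 a b \<subseteq> annulus \<Omega> r h \<longrightarrow>
    (let JJ = closed_segment a b \<inter> Z2; d = lattice_gap JJ;
         T = R powr (3/4) * d powr (1/2) * h powr (-1/2) * r powr (-1/4);
         S = sqrt (R * r) * (\<Sum>l\<in>JJ. mu \<Omega> ((1 / norm l) *\<^sub>R l) (1 / (R * norm l)))
     in (real (card JJ) \<le> T \<longrightarrow> S \<le> C * (R * r / (h^2 * d^2)) powr (1/4)) \<and>
        (real (card JJ) \<ge> T \<longrightarrow> S \<le> C * (r * real (card JJ) / (h * d^2)) powr (1/3)))"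
proof -
  obtain K where K: "\<forall>\<theta>. norm \<theta> = 1 \<longrightarrow> (\<forall>\<delta>>0. \<delta> powr (-1/2) * mu \<Omega> \<theta> \<delta> \<le> K)"
    using assms(5) ..
  obtain \<rho>0 \<rho>1 where "planar_body \<Omega> \<rho>0 \<rho>1 (max K 0)"
    by (rule planar_body_exists[OF assms(1,2,4) K])
  then interpret planar_body \<Omega> \<rho>0 \<rho>1 "max K 0" .
  have "lattice_segment \<Omega> \<rho>0 \<rho>1 (max K 0) r R h a b"
    if "10 \<le> r \<and> r \<le> R \<and> sqrt R \<le> h \<and> h \<le> R \<and> a \<in> Z2 \<and> b \<in> Z2 \<and>
      card (closed_segment a b \<inter> Z2) \<ge> 10 \<and> dilate9 a b \<subseteq> annulus \<Omega> r h" for r R h a b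
    using that by unfold_locales auto
  then show ?thesis
    unfolding Let_def using bound_const_pos
    by (blast intro: lattice_segment.sqrt_Rr_sum_mu_le lattice_segment.sqrt_Rr_sum_mu_le_many_points)
qed

end
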